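(* Let $f$ be an arithmetical function and let $g(n)=\sum_{d\mid n} f(d)$ for $n\ge 1$. Then for every integer $n\ge 1$, \[ \sum_{k=1}^{n} g(k)\,\omega(n-k)=\sum_{\substack{m+k=n\\ m\ge 1,\ k\ge 0}} f(m)\,\Omega_m(k). \]
   Context: $\omega:\mathbb{Z}\to\mathbb{Z}$ is defined by $\omega(0)=1$; $\omega(m)=(-1)^j$ if $m=\frac{3j^2+j}{2}$ or $m=\frac{3j^2-j}{2}$ for some integer $j\ge 1$; and $\omega(m)=0$ otherwise (in particular $\omega(m)=0$ for $m<0$). Thus $\prod_{n\ge1}(1-q^n)=\sum_{m\ge0}\omega(m)q^m$ (Euler's pentagonal number theorem). For integers $m\ge 1$ and $k$, $\Omega_m(k)=\sum_{j\ge 0}\omega(k-jm)=\omega(k)+\omega(k-m)+\omega(k-2m)+\cdots$ (a finite sum). *)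

theory Defs
  imports Complex_Main
begin

definition omega :: "int \<Rightarrow> int" where
  "omega m = (if m = 0 then 1
     else if (\<exists>j::int. j \<ge> 1 \<and> (m = (3*j^2 + j) div 2 \<or> m = (3*j^2 - j) div 2))
       then (-1) ^ nat (THE j::int. j \<ge> 1 \<and> (m = (3*j^2 + j) div 2 \<or> m = (3*j^2 - j) div 2))
       else 0)"

text \<open>Omega_m(k) = omega(k) + omega(k-m) + omega(k-2m) + ... (terms with negative
  argument vanish, so the sum over j with j*m \<le> k suffices; empty for k < 0).\<close>
definition Omega :: "nat \<Rightarrow> int \<Rightarrow> int" where
  "Omega m k = (\<Sum>j\<in>{j::nat. int (j*m) \<le> k}. omega (k - int (j*m)))"

end

theory Submission
  imports Defs
begin

text \<open>Only the divisor-sum structure of \<open>g\<close> matters, not the pentagonal weights: interchanging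
  the order of summation turns the left-hand side into \<open>\<Sum>\<^sub>m f(m) \<Sum>\<^sub>k \<omega>(n - k)\<close> with \<open>k\<close>
  running over the multiples of \<open>m\<close> in \<open>[1, n]\<close>, and writing \<open>k = m + j m\<close> this inner sum is
  \<open>\<Omega>\<^sub>m(n - m)\<close>.\<close>

lemma sum_divisor_sum_mult_swap:
  fixes f w :: "nat \<Rightarrow> 'a :: comm_semiring_1"
  shows "(\<Sum>k=1..n. (\<Sum>d | d dvd k. f d) * w k)
       = (\<Sum>m=1..n. f m * (\<Sum>k | k \<in> {1..n} \<and> m dvd k. w k))"
proof -
  have divisors: "{d. d dvd k} = {d. d \<in> {1..n} \<and> d dvd k}" if "k \<in> {1..n}" for k
    using that by (auto dest: dvd_imp_le intro: Nat.gr0I)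
  have "(\<Sum>k=1..n. (\<Sum>d | d dvd k. f d) * w k)
      = (\<Sum>k=1..n. \<Sum>d | d \<in> {1..n} \<and> d dvd k. f d * w k)"
    by (intro sum.cong refl) (simp add: divisors sum_distrib_right)
  also have "\<dots> = (\<Sum>m=1..n. \<Sum>k | k \<in> {1..n} \<and> m dvd k. f m * w k)"
    by (rule sum.swap_restrict) simp_all
  also have "\<dots> = (\<Sum>m=1..n. f m * (\<Sum>k | k \<in> {1..n} \<and> m dvd k. w k))"
    by (simp add: sum_distrib_left)
  finally show ?thesis .
qed

lemma Omega_eq_sum_multiples:
  assumes "1 \<le> m" "m \<le> n"
  shows "Omega m (int (n - m)) = (\<Sum>k | k \<in> {1..n} \<and> m dvd k. omega (int n - int k))"
  unfolding Omega_def
proof (rule sum.reindex_bij_witness[where i = "\<lambda>k. k div m - 1" and j = "\<lambda>j. (j + 1) * m"])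
  fix k assume k: "k \<in> {k. k \<in> {1..n} \<and> m dvd k}"
  then obtain c where c: "k = m * c"
    by auto
  with k assms have "c \<ge> 1"
    by (cases c) auto
  with c assms show "(k div m - 1 + 1) * m = k"
    by simp
  have "(c - 1) * m \<le> n - m"
    using c k \<open>c \<ge> 1\<close> by (cases c) (auto simp: algebra_simps)
  moreover have "k div m = c"
    using c assms by simp
  ultimately show "k div m - 1 \<in> {j. int (j * m) \<le> int (n - m)}"
    by (simp only: mem_Collect_eq of_nat_le_iff)
next
  fix j assume "j \<in> {j. int (j * m) \<le> int (n - m)}"
  then have j: "j * m \<le> n - m"
    by (simp only: mem_Collect_eq of_nat_le_iff)
  from assms show "(j + 1) * m div m - 1 = j"
    by simp
  from j assms show "(j + 1) * m \<in> {k. k \<in> {1..n} \<and> m dvd k}"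
    by auto
  from j assms show "omega (int n - int ((j + 1) * m)) = omega (int (n - m) - int (j * m))"
    by (simp add: algebra_simps of_nat_diff)
qed

theorem theorem1:
  fixes f :: "nat \<Rightarrow> complex" and n :: nat
  assumes "n \<ge> 1"
  shows "(\<Sum>k=1..n. (\<Sum>d | d dvd k. f d) * of_int (omega (int n - int k)))
       = (\<Sum>m=1..n. f m * of_int (Omega m (int (n - m))))"
  unfolding sum_divisor_sum_mult_swap
proof (intro sum.cong refl)
  fix m assume "m \<in> {1..n}"
  then show "f m * (\<Sum>k | k \<in> {1..n} \<and> m dvd k. of_int (omega (int n - int k)))
           = f m * of_int (Omega m (int (n - m)))"
    by (simp add: Omega_eq_sum_multiples del: of_nat_diff)
qed

end
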